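(* Let $d\ge 1$, let $(\mathbb{E},\mathcal{E})$ be a measurable space, let $\Phi:\mathbb{R}^d\times\mathbb{E}\to\mathbb{R}^d$ be measurable and let $\varepsilon_1$ be a random element of $\mathbb{E}$. Assume the following condition holds: there exists a measurable map $\phi:\mathbb{S}^{d-1}\times\mathbb{E}\to\mathbb{R}^d$ such that for all $e\in\mathbb{E}$, $\lim_{x\to\infty}x^{-1}\Phi(x s(x),e)=\phi(s,e)$ whenever $s(x)\to s$ in $\mathbb{S}^{d-1}$; and moreover, if $\Pr(\phi(s,\varepsilon_1)=0)>0$ for some $s\in\mathbb{S}^{d-1}$, then $\Pr(\varepsilon_1\in\mathbb{W})=1$ for a measurable set $\mathbb{W}\subset\mathbb{E}$ such that for all $e\in\mathbb{W}$, $\sup_{\|y\|\le x}\|\Phi(y,e)\|=O(x)$ as $x\to\infty$. Extend $\phi$ to $\mathbb{R}^d\times\mathbb{E}$ by $\phi(v,e)=\|v\|\,\phi(v/\|v\|,e)$ for $v\neq 0$ and $\phi(0,e)=0$. Then $\lim_{x\to\infty}x^{-1}\Phi(x v(x),e)=\phi(v,e)$ whenever $v(x)\to v\in\mathbb{R}^d\setminus\{0\}$ and $e\in\mathbb{E}$. If $\Pr(\phi(s,\varepsilon_1)=0)>0$ for some $s\in\mathbb{S}^{d-1}$, then this limit relation also holds for $v(x)\to v=0$ and $e\in\mathbb{W}$.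
   Context: $\|\cdot\|$ denotes the Euclidean norm on $\mathbb{R}^d$ and $\mathbb{S}^{d-1}=\{x\in\mathbb{R}^d:\|x\|=1\}$. *)

theory Defs
  imports "HOL-Probability.Probability"
begin

definition phi_ext :: "('a::real_normed_vector \<Rightarrow> 'e \<Rightarrow> 'a) \<Rightarrow> 'a \<Rightarrow> 'e \<Rightarrow> 'a" where
  "phi_ext phi v e = (if v = 0 then 0 else norm v *\<^sub>R phi (v /\<^sub>R norm v) e)"

end

theory Submission
  imports Defs
begin

text \<open>For v0 \<noteq> 0 write x v(x) = r(x) s(x) with r(x) = x \<parallel>v(x)\<parallel> and s(x) = v(x) / \<parallel>v(x)\<parallel>,
  so s(x) tends to v0 / \<parallel>v0\<parallel> and r grows linearly. A linear time change preserves limits along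
  spherical paths: if the limit along (r, s) failed at arbitrarily large times, reading s at those
  times as a function of r would give a spherical path along which the hypothesis fails.
  Multiplying by \<parallel>v(x)\<parallel> \<longrightarrow> \<parallel>v0\<parallel> gives the homogeneous extension. For v(x) \<longrightarrow> 0 and e \<in> W,
  the linear bound applied at the radius max(x \<parallel>v(x)\<parallel>, \<surd>x) \<longrightarrow> \<infinity> gives
  \<parallel>Phi(x v(x), e)\<parallel> / x \<le> C max(\<parallel>v(x)\<parallel>, 1/\<surd>x) \<longrightarrow> 0.\<close>

lemma phi_ext_nonzero: "v \<noteq> 0 \<Longrightarrow> phi_ext phi v e = norm v *\<^sub>R phi (sgn v) e"
  by (simp add: phi_ext_def sgn_div_norm)

lemma tendsto_path_time_change:
  fixes G :: "real \<Rightarrow> 'a::metric_space \<Rightarrow> 'b::metric_space"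
  assumes path_lim: "\<And>s. (\<forall>t. s t \<in> S) \<Longrightarrow> (s \<longlongrightarrow> z) at_top \<Longrightarrow> ((\<lambda>t. G t (s t)) \<longlongrightarrow> L) at_top"
    and z: "z \<in> S"
    and u_in: "\<forall>\<^sub>F x in at_top. u x \<in> S" and u_lim: "(u \<longlongrightarrow> z) at_top"
    and r_top: "filterlim r at_top at_top"
    and c: "c > 0" and r_le: "\<forall>\<^sub>F x in at_top. r x \<le> c * x"
  shows "((\<lambda>x. G (r x) (u x)) \<longlongrightarrow> L) at_top"
proof (rule ccontr)
  assume "\<not> ?thesis"
  then obtain \<epsilon> where \<epsilon>: "\<epsilon> > 0"
    and "\<not> (\<forall>\<^sub>F x in at_top. dist (G (r x) (u x)) L < \<epsilon>)"
    unfolding tendsto_iff by blast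
  then have often_far: "\<exists>\<^sub>F x in at_top. dist (G (r x) (u x)) L \<ge> \<epsilon>"
    by (simp add: not_eventually not_less)
  have "\<forall>\<^sub>F x in at_top. u x \<in> S \<and> r x \<le> c * x"
    using u_in r_le by (rule eventually_conj)
  then obtain X0 where X0: "\<And>x. x \<ge> X0 \<Longrightarrow> u x \<in> S \<and> r x \<le> c * x"
    unfolding eventually_at_top_linorder by blast
  define bad where "bad x \<longleftrightarrow> x \<ge> X0 \<and> dist (G (r x) (u x)) L \<ge> \<epsilon>" for x
  \<comment> \<open>Visits the bad point u x at time r x and sits at z otherwise; since r x \<le> c * x,
    large times are only reached from large x, so s converges to z.\<close>
  define s where "s t = (if \<exists>x. bad x \<and> r x = t then u (SOME x. bad x \<and> r x = t) else z)" for t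
  have bad_time: "bad (SOME x. bad x \<and> r x = t) \<and> r (SOME x. bad x \<and> r x = t) = t"
    if "\<exists>x. bad x \<and> r x = t" for t
    using someI_ex[OF that] .
  have s_in: "\<forall>t. s t \<in> S"
    using bad_time X0 z by (simp add: s_def bad_def)
  have "(s \<longlongrightarrow> z) at_top"
    unfolding tendsto_iff
  proof (intro allI impI)
    fix \<delta> :: real assume "\<delta> > 0"
    with u_lim obtain X1 where X1: "\<And>x. x \<ge> X1 \<Longrightarrow> dist (u x) z < \<delta>"
      unfolding tendsto_iff eventually_at_top_linorder by blast
    have "dist (s t) z < \<delta>" if "t \<ge> c * X1" for t
    proof (cases "\<exists>x. bad x \<and> r x = t")
      case True
      define x where "x = (SOME x. bad x \<and> r x = t)"
      have "c * X1 \<le> c * x"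
        using bad_time[OF True] X0 that by (fastforce simp: x_def bad_def)
      then show ?thesis
        using X1 c True by (simp add: s_def x_def)
    qed (use \<open>\<delta> > 0\<close> in \<open>auto simp: s_def\<close>)
    then show "\<forall>\<^sub>F t in at_top. dist (s t) z < \<delta>"
      unfolding eventually_at_top_linorder by blast
  qed
  with s_in \<epsilon> obtain T where T: "\<And>t. t \<ge> T \<Longrightarrow> dist (G t (s t)) L < \<epsilon>"
    using path_lim unfolding tendsto_iff eventually_at_top_linorder by blast
  have "\<forall>\<^sub>F x in at_top. x \<ge> X0 \<and> r x \<ge> T"
    using r_top by (simp add: eventually_conj eventually_ge_at_top filterlim_at_top)
  from frequently_ex[OF frequently_eventually_conj[OF often_far this]]
  obtain x where "bad x" "r x \<ge> T"
    by (auto simp: bad_def)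
  then have x_bad_time: "\<exists>y. bad y \<and> r y = r x" by blast
  define y where "y = (SOME y. bad y \<and> r y = r x)"
  have "bad y" "r y = r x" "s (r x) = u y"
    using bad_time[OF x_bad_time] x_bad_time by (simp_all add: y_def s_def)
  with T[OF \<open>r x \<ge> T\<close>] show False
    by (simp add: bad_def)
qed

lemma scaled_limit_nonzero_direction:
  fixes f :: "'a::real_normed_vector \<Rightarrow> 'b::real_normed_vector"
  assumes lim: "\<And>s. (\<forall>t. s t \<in> sphere 0 1) \<Longrightarrow> (s \<longlongrightarrow> sgn v0) at_top
                   \<Longrightarrow> ((\<lambda>t. (1 / t) *\<^sub>R f (t *\<^sub>R s t)) \<longlongrightarrow> L) at_top"
    and v0: "v0 \<noteq> 0" and v: "(v \<longlongrightarrow> v0) at_top"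
  shows "((\<lambda>x::real. (1 / x) *\<^sub>R f (x *\<^sub>R v x)) \<longlongrightarrow> norm v0 *\<^sub>R L) at_top"
proof -
  define r where "r x = x * norm (v x)" for x
  have v_ne: "\<forall>\<^sub>F x in at_top. v x \<noteq> 0"
    using tendsto_imp_eventually_ne[OF v v0] .
  have "((\<lambda>x. (1 / r x) *\<^sub>R f (r x *\<^sub>R sgn (v x))) \<longlongrightarrow> L) at_top"
  proof (rule tendsto_path_time_change[where G = "\<lambda>t w. (1 / t) *\<^sub>R f (t *\<^sub>R w)" and u = "\<lambda>x. sgn (v x)"
        and S = "sphere 0 1" and z = "sgn v0" and c = "2 * norm v0"])
    show "\<forall>\<^sub>F x in at_top. sgn (v x) \<in> sphere 0 1"
      using v_ne by eventually_elim (simp add: norm_sgn)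
    show "((\<lambda>x. sgn (v x)) \<longlongrightarrow> sgn v0) at_top"
      using v v0 by (rule tendsto_sgn)
    show "filterlim r at_top at_top"
      unfolding r_def using v0
      by (intro filterlim_at_top_mult_tendsto_pos[OF tendsto_norm[OF v]] filterlim_ident) auto
    have "\<forall>\<^sub>F x in at_top. norm (v x) < 2 * norm v0"
      using v0 by (intro order_tendstoD(2)[OF tendsto_norm[OF v]]) auto
    with eventually_ge_at_top[of 0]
    show "\<forall>\<^sub>F x in at_top. r x \<le> 2 * norm v0 * x"
      by eventually_elim (simp add: r_def mult.commute mult_left_mono)
  qed (use lim v0 in \<open>auto simp: norm_sgn\<close>)
  then have "((\<lambda>x. norm (v x) *\<^sub>R ((1 / r x) *\<^sub>R f (r x *\<^sub>R sgn (v x)))) \<longlongrightarrow> norm v0 *\<^sub>R L) at_top"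
    by (intro tendsto_scaleR tendsto_norm v)
  moreover from v_ne eventually_gt_at_top[of 0]
  have "\<forall>\<^sub>F x in at_top. norm (v x) *\<^sub>R ((1 / r x) *\<^sub>R f (r x *\<^sub>R sgn (v x)))
                         = (1 / x) *\<^sub>R f (x *\<^sub>R v x)"
    by eventually_elim (simp add: r_def sgn_div_norm mult.assoc)
  ultimately show ?thesis
    by (rule Lim_transform_eventually)
qed

lemma scaled_limit_zero_of_linear_bound:
  fixes f :: "'a::real_normed_vector \<Rightarrow> 'b::real_normed_vector"
  assumes bound: "\<forall>\<^sub>F x in at_top. \<forall>y. norm y \<le> x \<longrightarrow> norm (f y) \<le> C * x"
    and v: "(v \<longlongrightarrow> 0) at_top"
  shows "((\<lambda>x::real. (1 / x) *\<^sub>R f (x *\<^sub>R v x)) \<longlongrightarrow> 0) at_top"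
proof (rule Lim_null_comparison)
  \<comment> \<open>x * norm (v x) itself need not tend to infinity, so the bound is applied at a larger radius.\<close>
  define \<rho> where "\<rho> x = max (x * norm (v x)) (sqrt x)" for x
  have "filterlim \<rho> at_top at_top"
    by (rule filterlim_at_top_mono[OF sqrt_at_top]) (simp add: \<rho>_def)
  then have "\<forall>\<^sub>F x in at_top. \<forall>y. norm y \<le> \<rho> x \<longrightarrow> norm (f y) \<le> C * \<rho> x"
    using bound by (rule filterlim_iff[THEN iffD1, rule_format])
  with eventually_gt_at_top[of 0]
  show "\<forall>\<^sub>F x in at_top. norm ((1 / x) *\<^sub>R f (x *\<^sub>R v x)) \<le> C * max (norm (v x)) (inverse (sqrt x))"
  proof eventually_elim
    case (elim x)
    have \<rho>_over_x: "\<rho> x / x = max (norm (v x)) (inverse (sqrt x))"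
      using elim(1) by (simp add: \<rho>_def max_divide_distrib_right sqrt_divide_self_eq)
    have "norm ((1 / x) *\<^sub>R f (x *\<^sub>R v x)) = norm (f (x *\<^sub>R v x)) / x"
      using elim(1) by simp
    also have "\<dots> \<le> C * \<rho> x / x"
      using elim by (intro divide_right_mono) (auto simp: \<rho>_def)
    also have "\<dots> = C * max (norm (v x)) (inverse (sqrt x))"
      by (simp only: times_divide_eq_right[symmetric] \<rho>_over_x)
    finally show ?case .
  qed
  have "((\<lambda>x. C * max (norm (v x)) (inverse (sqrt x))) \<longlongrightarrow> C * max 0 0) at_top"
    by (intro tendsto_mult tendsto_const tendsto_max tendsto_norm_zero v
        tendsto_inverse_0_at_top sqrt_at_top)
  then show "((\<lambda>x. C * max (norm (v x)) (inverse (sqrt x))) \<longlongrightarrow> 0) at_top"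
    by simp
qed

theorem lemma2p3:
  fixes Phi :: "'a::euclidean_space \<Rightarrow> 'e \<Rightarrow> 'a"
    and phi :: "'a \<Rightarrow> 'e \<Rightarrow> 'a"
    and ME :: "'e measure"
    and P :: "'w measure"
    and eps :: "'w \<Rightarrow> 'e"
    and W :: "'e set"
  assumes Phi_meas: "(\<lambda>(y, e). Phi y e) \<in> (borel \<Otimes>\<^sub>M ME) \<rightarrow>\<^sub>M borel"
    and P: "prob_space P"
    and eps_meas: "eps \<in> P \<rightarrow>\<^sub>M ME"
    and phi_meas: "(\<lambda>(s, e). phi s e) \<in> (restrict_space borel (sphere 0 1) \<Otimes>\<^sub>M ME) \<rightarrow>\<^sub>M borel"
    and lim: "\<And>s0 s e. s0 \<in> sphere 0 1 \<Longrightarrow> (\<forall>x. s x \<in> sphere 0 1) \<Longrightarrow> (s \<longlongrightarrow> s0) at_top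
               \<Longrightarrow> e \<in> space ME
               \<Longrightarrow> ((\<lambda>x::real. (1 / x) *\<^sub>R Phi (x *\<^sub>R s x) e) \<longlongrightarrow> phi s0 e) at_top"
    and W_cond: "(\<exists>s\<in>sphere 0 1. measure P {\<omega>\<in>space P. phi s (eps \<omega>) = 0} > 0) \<Longrightarrow>
               W \<in> sets ME \<and> measure P {\<omega>\<in>space P. eps \<omega> \<in> W} = 1 \<and>
               (\<forall>e\<in>W. \<exists>C. \<forall>\<^sub>F x in at_top. \<forall>y. norm y \<le> x \<longrightarrow> norm (Phi y e) \<le> C * x)"
  shows "(\<forall>v0 v e. v0 \<noteq> 0 \<longrightarrow> (v \<longlongrightarrow> v0) at_top \<longrightarrow> e \<in> space ME \<longrightarrow>
            ((\<lambda>x::real. (1 / x) *\<^sub>R Phi (x *\<^sub>R v x) e) \<longlongrightarrow> phi_ext phi v0 e) at_top)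
       \<and> ((\<exists>s\<in>sphere 0 1. measure P {\<omega>\<in>space P. phi s (eps \<omega>) = 0} > 0) \<longrightarrow>
            (\<forall>v e. (v \<longlongrightarrow> 0) at_top \<longrightarrow> e \<in> W \<longrightarrow>
              ((\<lambda>x::real. (1 / x) *\<^sub>R Phi (x *\<^sub>R v x) e) \<longlongrightarrow> phi_ext phi 0 e) at_top))"
proof (intro conjI allI impI)
  fix v0 :: 'a and v :: "real \<Rightarrow> 'a" and e
  assume v0: "v0 \<noteq> 0" and v: "(v \<longlongrightarrow> v0) at_top" and e: "e \<in> space ME"
  have "((\<lambda>x::real. (1 / x) *\<^sub>R Phi (x *\<^sub>R v x) e) \<longlongrightarrow> norm v0 *\<^sub>R phi (sgn v0) e) at_top"
  proof (rule scaled_limit_nonzero_direction[OF _ v0 v])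
    fix s :: "real \<Rightarrow> 'a"
    assume "\<forall>t. s t \<in> sphere 0 1" and "(s \<longlongrightarrow> sgn v0) at_top"
    with v0 e show "((\<lambda>t. (1 / t) *\<^sub>R Phi (t *\<^sub>R s t) e) \<longlongrightarrow> phi (sgn v0) e) at_top"
      by (intro lim) (auto simp: norm_sgn)
  qed
  then show "((\<lambda>x::real. (1 / x) *\<^sub>R Phi (x *\<^sub>R v x) e) \<longlongrightarrow> phi_ext phi v0 e) at_top"
    unfolding phi_ext_nonzero[OF v0] .
next
  fix v :: "real \<Rightarrow> 'a" and e
  assume degenerate: "\<exists>s\<in>sphere 0 1. measure P {\<omega>\<in>space P. phi s (eps \<omega>) = 0} > 0"
    and v: "(v \<longlongrightarrow> 0) at_top" and e: "e \<in> W"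
  obtain C where "\<forall>\<^sub>F x in at_top. \<forall>y. norm y \<le> x \<longrightarrow> norm (Phi y e) \<le> C * x"
    using W_cond[OF degenerate] e by (auto simp only:)
  from scaled_limit_zero_of_linear_bound[OF this v]
  show "((\<lambda>x::real. (1 / x) *\<^sub>R Phi (x *\<^sub>R v x) e) \<longlongrightarrow> phi_ext phi 0 e) at_top"
    by (simp add: phi_ext_def)
qed

end
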